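(* Let $A=kQ/I_S$ be a homotopy path algebra with path category $\mathcal C_A$ and path poset $\operatorname{Path}_A$. Then the functor $\Phi:\operatorname{Path}_A\to\mathcal C_A$, $p\mapsto h(p)$, $(p<q)\mapsto q/p$, is an almost discrete fibration.
   Context: $Q$ is a finite quiver (loops and cycles allowed); paths are concatenated left to right ($pq$ is $p$ followed by $q$), $t(p)$ and $h(p)$ are tail and head. A homotopy path algebra is $A=kQ/I_S$ where $S$ is a set of pairs $(p,q)$ of paths with equal tails and heads, $I_S$ is the ideal generated by the $p-q$, and $I_S$ is left and right cancellative: writing $p\sim q$ iff $p-q\in I_S$, $rp\sim rq$ implies $p\sim q$ and $pr\sim qr$ implies $p\sim q$. The path category $\mathcal C_A$ has objects the vertices of $Q$ and morphisms the $\sim$-classes of paths. $\operatorname{Path}_A$ is the set of all paths (including trivial ones) modulo $\sim$, ordered by $p\le q$ iff $q\sim pr$ for some path $r$, viewed as a category; $q/p$ denotes the (by cancellativity unique) class of $r$ with $q\sim pr$. A factorization $g=g_0\circ\cdots\circ g_{n+1}$ ($n\ge0$) is nontrivial if no $g_i$ is an isomorphism. A functor $F:\mathcal C\to\mathcal D$ is an almost discrete fibration if for every morphism $q$ of $\mathcal D$, every $p$ with $F(p)=q$ and every nontrivial factorization $q=g_0\circ\cdots\circ g_{n+1}$, there is a nontrivial factorization $p=f_0\circ\cdots\circ f_{n+1}$ with $F(f_i)=g_i$, unique up to $(f_i)\sim(f'_i)$ iff there are isomorphisms $h_0,\dots,h_n$ with $f'_0=f_0\circ h_0$, $f'_i=h_{i-1}^{-1}\circ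 f_i\circ h_i$ ($1\le i\le n$), $f'_{n+1}=h_n^{-1}\circ f_{n+1}$. *)

theory Defs
  imports Main
begin

record ('v,'e) quiver =
  verts :: "'v set"
  arrs  :: "'e set"
  src   :: "'e \<Rightarrow> 'v"
  tgt   :: "'e \<Rightarrow> 'v"

text \<open>A path is a start vertex together with the list of its arrows
  (concatenated left to right); the trivial path at v is (v, []).\<close>
type_synonym ('v,'e) path = "'v \<times> 'e list"

fun arrow_chain :: "('e \<Rightarrow> 'v) \<Rightarrow> ('e \<Rightarrow> 'v) \<Rightarrow> 'v \<Rightarrow> 'e list \<Rightarrow> bool" where
  "arrow_chain s t v [] = True"
| "arrow_chain s t v (a # as) = (s a = v \<and> arrow_chain s t (t a) as)"

fun end_vertex :: "('e \<Rightarrow> 'v) \<Rightarrow> 'v \<Rightarrow> 'e list \<Rightarrow> 'v" where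
  "end_vertex t v [] = v"
| "end_vertex t v (a # as) = end_vertex t (t a) as"

definition valid_path :: "('v,'e) quiver \<Rightarrow> ('v,'e) path \<Rightarrow> bool" where
  "valid_path Q p \<longleftrightarrow> fst p \<in> verts Q \<and> set (snd p) \<subseteq> arrs Q
      \<and> arrow_chain (src Q) (tgt Q) (fst p) (snd p)"

definition ptail :: "('v,'e) path \<Rightarrow> 'v" where
  "ptail p = fst p"

definition phead :: "('v,'e) quiver \<Rightarrow> ('v,'e) path \<Rightarrow> 'v" where
  "phead Q p = end_vertex (tgt Q) (fst p) (snd p)"

definition pconc :: "('v,'e) path \<Rightarrow> ('v,'e) path \<Rightarrow> ('v,'e) path" where
  "pconc p q = (fst p, snd p @ snd q)"

definition finite_quiver :: "('v,'e) quiver \<Rightarrow> bool" where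
  "finite_quiver Q \<longleftrightarrow> finite (verts Q) \<and> finite (arrs Q)
     \<and> src Q ` arrs Q \<subseteq> verts Q \<and> tgt Q ` arrs Q \<subseteq> verts Q"

text \<open>Elements of kQ are (finitely supported) functions from paths to k;
  the basis element of a path p is delta p.\<close>
definition delta :: "('v,'e) path \<Rightarrow> (('v,'e) path \<Rightarrow> 'k::field)" where
  "delta p = (\<lambda>x. if x = p then 1 else 0)"

text \<open>The two-sided ideal of kQ generated by the elements p - q, (p,q) in S:
  the k-linear span of all u(p - q)w with u, w paths (products of paths that
  are not composable vanish in kQ).\<close>
inductive_set hideal :: "('v,'e) quiver \<Rightarrow> (('v,'e) path \<times> ('v,'e) path) set
     \<Rightarrow> (('v,'e) path \<Rightarrow> 'k::field) set"
  for Q S where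
  zero: "(\<lambda>_. 0) \<in> hideal Q S"
| add: "x \<in> hideal Q S \<Longrightarrow> y \<in> hideal Q S \<Longrightarrow> (\<lambda>z. x z + y z) \<in> hideal Q S"
| smult: "x \<in> hideal Q S \<Longrightarrow> (\<lambda>z. c * x z) \<in> hideal Q S"
| gen: "(p, q) \<in> S \<Longrightarrow> valid_path Q u \<Longrightarrow> valid_path Q w \<Longrightarrow>
        phead Q u = ptail p \<Longrightarrow> phead Q p = ptail w \<Longrightarrow>
        (\<lambda>z. delta (pconc (pconc u p) w) z - delta (pconc (pconc u q) w) z) \<in> hideal Q S"

definition hsim :: "'k::field itself \<Rightarrow> ('v,'e) quiver \<Rightarrow> (('v,'e) path \<times> ('v,'e) path) set
     \<Rightarrow> ('v,'e) path \<Rightarrow> ('v,'e) path \<Rightarrow> bool" where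
  "hsim K Q S p q \<longleftrightarrow> valid_path Q p \<and> valid_path Q q
      \<and> ((\<lambda>z. delta p z - delta q z) :: ('v,'e) path \<Rightarrow> 'k) \<in> hideal Q S"

definition homotopy_path_algebra :: "'k::field itself \<Rightarrow> ('v,'e) quiver
     \<Rightarrow> (('v,'e) path \<times> ('v,'e) path) set \<Rightarrow> bool" where
  "homotopy_path_algebra K Q S \<longleftrightarrow>
     finite_quiver Q
   \<and> (\<forall>(p, q) \<in> S. valid_path Q p \<and> valid_path Q q
         \<and> ptail p = ptail q \<and> phead Q p = phead Q q)
   \<and> (\<forall>r p q. valid_path Q r \<and> valid_path Q p \<and> valid_path Q q
         \<and> phead Q r = ptail p \<and> phead Q r = ptail q
         \<and> hsim K Q S (pconc r p) (pconc r q) \<longrightarrow> hsim K Q S p q)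
   \<and> (\<forall>r p q. valid_path Q r \<and> valid_path Q p \<and> valid_path Q q
         \<and> phead Q p = ptail r \<and> phead Q q = ptail r
         \<and> hsim K Q S (pconc p r) (pconc q r) \<longrightarrow> hsim K Q S p q)"

text \<open>cComp g f is g \<circ> f (f first).\<close>
record ('o,'m) cat =
  cOb   :: "'o set"
  cMor  :: "'m set"
  cDom  :: "'m \<Rightarrow> 'o"
  cCod  :: "'m \<Rightarrow> 'o"
  cComp :: "'m \<Rightarrow> 'm \<Rightarrow> 'm"
  cId   :: "'o \<Rightarrow> 'm"

definition is_functor :: "('o,'m) cat \<Rightarrow> ('p,'n) cat \<Rightarrow> ('o \<Rightarrow> 'p) \<Rightarrow> ('m \<Rightarrow> 'n) \<Rightarrow> bool" where
  "is_functor C D FO FM \<longleftrightarrow>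
     (\<forall>x \<in> cOb C. FO x \<in> cOb D)
   \<and> (\<forall>f \<in> cMor C. FM f \<in> cMor D \<and> cDom D (FM f) = FO (cDom C f)
                     \<and> cCod D (FM f) = FO (cCod C f))
   \<and> (\<forall>x \<in> cOb C. FM (cId C x) = cId D (FO x))
   \<and> (\<forall>f \<in> cMor C. \<forall>g \<in> cMor C. cDom C g = cCod C f \<longrightarrow>
         FM (cComp C g f) = cComp D (FM g) (FM f))"

definition is_iso :: "('o,'m) cat \<Rightarrow> 'm \<Rightarrow> bool" where
  "is_iso C f \<longleftrightarrow> f \<in> cMor C \<and> (\<exists>g \<in> cMor C. cDom C g = cCod C f \<and> cCod C g = cDom C f
       \<and> cComp C g f = cId C (cDom C f) \<and> cComp C f g = cId C (cCod C f))"

fun comp_list :: "('o,'m) cat \<Rightarrow> 'm list \<Rightarrow> 'm" where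
  "comp_list C [f] = f"
| "comp_list C (f # g # fs) = cComp C f (comp_list C (g # fs))"

definition factorization :: "('o,'m) cat \<Rightarrow> 'm \<Rightarrow> 'm list \<Rightarrow> bool" where
  "factorization C g fs \<longleftrightarrow> length fs \<ge> 2 \<and> set fs \<subseteq> cMor C
     \<and> (\<forall>i. Suc i < length fs \<longrightarrow> cDom C (fs ! i) = cCod C (fs ! Suc i))
     \<and> comp_list C fs = g"

definition nontrivial_factorization :: "('o,'m) cat \<Rightarrow> 'm \<Rightarrow> 'm list \<Rightarrow> bool" where
  "nontrivial_factorization C g fs \<longleftrightarrow> factorization C g fs \<and> (\<forall>f \<in> set fs. \<not> is_iso C f)"

text \<open>(f_i) ~ (f'_i): isomorphisms h_0..h_n (with inverses h'_i) such that
  f'_0 = f_0 \<circ> h_0, f'_i = h_(i-1)^-1 \<circ> f_i \<circ> h_i, f'_(n+1) = h_n^-1 \<circ> f_(n+1).\<close>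
definition factorization_equiv :: "('o,'m) cat \<Rightarrow> 'm list \<Rightarrow> 'm list \<Rightarrow> bool" where
  "factorization_equiv C fs fs' \<longleftrightarrow> length fs' = length fs \<and>
     (\<exists>hs hs'. length hs = length fs - 1 \<and> length hs' = length hs
       \<and> (\<forall>i < length hs. hs ! i \<in> cMor C \<and> hs' ! i \<in> cMor C
            \<and> cDom C (hs' ! i) = cCod C (hs ! i) \<and> cCod C (hs' ! i) = cDom C (hs ! i)
            \<and> cComp C (hs' ! i) (hs ! i) = cId C (cDom C (hs ! i))
            \<and> cComp C (hs ! i) (hs' ! i) = cId C (cCod C (hs ! i))
            \<and> cCod C (hs ! i) = cDom C (fs ! i))
       \<and> fs' ! 0 = cComp C (fs ! 0) (hs ! 0)
       \<and> (\<forall>i. 0 < i \<and> i < length fs - 1 \<longrightarrow>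
              fs' ! i = cComp C (hs' ! (i - 1)) (cComp C (fs ! i) (hs ! i)))
       \<and> fs' ! (length fs - 1) = cComp C (hs' ! (length fs - 2)) (fs ! (length fs - 1)))"

definition almost_discrete_fibration ::
  "('o,'m) cat \<Rightarrow> ('p,'n) cat \<Rightarrow> ('o \<Rightarrow> 'p) \<Rightarrow> ('m \<Rightarrow> 'n) \<Rightarrow> bool" where
  "almost_discrete_fibration C D FO FM \<longleftrightarrow> is_functor C D FO FM \<and>
     (\<forall>q \<in> cMor D. \<forall>p \<in> cMor C. FM p = q \<longrightarrow>
        (\<forall>gs. nontrivial_factorization D q gs \<longrightarrow>
           (\<exists>fs. nontrivial_factorization C p fs \<and> map FM fs = gs)
         \<and> (\<forall>fs fs'. nontrivial_factorization C p fs \<and> map FM fs = gs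
                   \<and> nontrivial_factorization C p fs' \<and> map FM fs' = gs
                   \<longrightarrow> factorization_equiv C fs fs')))"

definition hclass :: "'k::field itself \<Rightarrow> ('v,'e) quiver \<Rightarrow> (('v,'e) path \<times> ('v,'e) path) set
     \<Rightarrow> ('v,'e) path \<Rightarrow> ('v,'e) path set" where
  "hclass K Q S p = {q. hsim K Q S q p}"

definition path_category :: "'k::field itself \<Rightarrow> ('v,'e) quiver \<Rightarrow> (('v,'e) path \<times> ('v,'e) path) set
     \<Rightarrow> ('v, ('v,'e) path set) cat" where
  "path_category K Q S =
     \<lparr> cOb = verts Q,
       cMor = {hclass K Q S p | p. valid_path Q p},
       cDom = (\<lambda>M. ptail (SOME p. p \<in> M)),
       cCod = (\<lambda>M. phead Q (SOME p. p \<in> M)),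
       cComp = (\<lambda>M N. {r. \<exists>n \<in> N. \<exists>m \<in> M. phead Q n = ptail m \<and> hsim K Q S r (pconc n m)}),
       cId = (\<lambda>v. hclass K Q S (v, [])) \<rparr>"

definition path_leq :: "'k::field itself \<Rightarrow> ('v,'e) quiver \<Rightarrow> (('v,'e) path \<times> ('v,'e) path) set
     \<Rightarrow> ('v,'e) path set \<Rightarrow> ('v,'e) path set \<Rightarrow> bool" where
  "path_leq K Q S P R \<longleftrightarrow> (\<exists>p \<in> P. \<exists>q \<in> R. \<exists>r. valid_path Q r \<and> phead Q p = ptail r
       \<and> hsim K Q S q (pconc p r))"

text \<open>Path_A viewed as a (thin) category: one morphism (P,R) for each P \<le> R.\<close>
definition path_poset :: "'k::field itself \<Rightarrow> ('v,'e) quiver \<Rightarrow> (('v,'e) path \<times> ('v,'e) path) set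
     \<Rightarrow> (('v,'e) path set, ('v,'e) path set \<times> ('v,'e) path set) cat" where
  "path_poset K Q S =
     \<lparr> cOb = {hclass K Q S p | p. valid_path Q p},
       cMor = {(P, R). P \<in> {hclass K Q S p | p. valid_path Q p}
                    \<and> R \<in> {hclass K Q S p | p. valid_path Q p} \<and> path_leq K Q S P R},
       cDom = fst,
       cCod = snd,
       cComp = (\<lambda>g f. (fst f, snd g)),
       cId = (\<lambda>P. (P, P)) \<rparr>"

definition Phi_ob :: "('v,'e) quiver \<Rightarrow> ('v,'e) path set \<Rightarrow> 'v" where
  "Phi_ob Q P = phead Q (SOME p. p \<in> P)"

definition Phi_mor :: "'k::field itself \<Rightarrow> ('v,'e) quiver \<Rightarrow> (('v,'e) path \<times> ('v,'e) path) set
     \<Rightarrow> ('v,'e) path set \<times> ('v,'e) path set \<Rightarrow> ('v,'e) path set" where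
  "Phi_mor K Q S PR = {r. valid_path Q r \<and>
      (\<exists>p \<in> fst PR. \<exists>q \<in> snd PR. phead Q p = ptail r \<and> hsim K Q S q (pconc p r))}"

end

theory Submission
  imports Defs
begin

text \<open>\<Phi> sends p \<le> pr to the class of r; that this is well defined is exactly left
  cancellation. Hence a factorization g_0 \<circ> \<dots> \<circ> g_(n+1) of that class, g_i = [r_i], lifts along the
  chain p \<le> p r_(n+1) \<le> p r_(n+1) r_n \<le> \<dots> \<le> p r_(n+1) \<dots> r_0 \<sim> pr, and the lift is nontrivial
  because functors preserve isomorphisms. A morphism of Path_A is determined by its domain and its
  image under \<Phi>, so the lift is unique; identities then witness the required equivalence.
  The only algebra needed is that I_S is a two-sided ideal whose elements have vanishing
  coefficient sum on every set of parallel paths, so that \<sim> is a congruence preserving endpoints.\<close>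

lemma end_vertex_append [simp]:
  "end_vertex t v (xs @ ys) = end_vertex t (end_vertex t v xs) ys"
  by (induction xs arbitrary: v) auto

lemma arrow_chain_append [simp]:
  "arrow_chain s t v (xs @ ys) \<longleftrightarrow> arrow_chain s t v xs \<and> arrow_chain s t (end_vertex t v xs) ys"
  by (induction xs arbitrary: v) auto

lemma valid_path_pconc:
  "valid_path Q p \<Longrightarrow> valid_path Q q \<Longrightarrow> phead Q p = ptail q \<Longrightarrow> valid_path Q (pconc p q)"
  by (auto simp: valid_path_def pconc_def phead_def ptail_def)

lemma phead_pconc: "phead Q p = ptail q \<Longrightarrow> phead Q (pconc p q) = phead Q q"
  by (auto simp: pconc_def phead_def ptail_def)

lemma ptail_pconc [simp]: "ptail (pconc p q) = ptail p"
  by (simp add: pconc_def ptail_def)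

lemma pconc_assoc: "pconc (pconc p q) r = pconc p (pconc q r)"
  by (simp add: pconc_def)

lemma end_vertex_in_verts:
  "tgt Q ` arrs Q \<subseteq> verts Q \<Longrightarrow> v \<in> verts Q \<Longrightarrow> set as \<subseteq> arrs Q \<Longrightarrow> end_vertex (tgt Q) v as \<in> verts Q"
  by (induction as arbitrary: v) auto

lemma valid_path_trivial_phead:
  "finite_quiver Q \<Longrightarrow> valid_path Q p \<Longrightarrow> valid_path Q (phead Q p, [])"
  unfolding finite_quiver_def valid_path_def phead_def by (simp add: end_vertex_in_verts)

text \<open>Multiplication of an element of kQ by the path r on the left, resp. right, in terms of
  coefficient functions: the coefficient of r z, resp. z r, is that of z.\<close>
definition left_mult :: "('v,'e) quiver \<Rightarrow> ('v,'e) path \<Rightarrow> (('v,'e) path \<Rightarrow> 'k) \<Rightarrow> ('v,'e) path \<Rightarrow> 'k::zero" where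
  "left_mult Q r x = (\<lambda>z. if fst z = fst r \<and> take (length (snd r)) (snd z) = snd r
     then x (phead Q r, drop (length (snd r)) (snd z)) else 0)"

definition right_mult :: "('v,'e) quiver \<Rightarrow> ('v,'e) path \<Rightarrow> (('v,'e) path \<Rightarrow> 'k) \<Rightarrow> ('v,'e) path \<Rightarrow> 'k::zero" where
  "right_mult Q r x = (\<lambda>z. let n = length (snd z) - length (snd r) in
     if length (snd r) \<le> length (snd z) \<and> drop n (snd z) = snd r \<and> phead Q (fst z, take n (snd z)) = fst r
     then x (fst z, take n (snd z)) else 0)"

lemma left_mult_delta:
  "left_mult Q r (delta p) = (if fst p = phead Q r then delta (pconc r p) else (\<lambda>_. 0))"
proof
  fix z
  show "left_mult Q r (delta p) z = (if fst p = phead Q r then delta (pconc r p) else (\<lambda>_. 0)) z"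
    unfolding left_mult_def delta_def pconc_def
    by (cases z, cases p, cases "take (length (snd r)) (snd z) = snd r")
       (auto, metis append_take_drop_id)
qed

lemma right_mult_delta:
  "right_mult Q r (delta p) = (if phead Q p = fst r then delta (pconc p r) else (\<lambda>_. 0))"
proof
  fix z
  show "right_mult Q r (delta p) z = (if phead Q p = fst r then delta (pconc p r) else (\<lambda>_. 0)) z"
    unfolding right_mult_def delta_def pconc_def Let_def
    by (cases z, cases p,
        cases "length (snd r) \<le> length (snd z) \<and> drop (length (snd z) - length (snd r)) (snd z) = snd r")
       (auto, metis append_take_drop_id)
qed

lemma left_mult_linear:
  fixes x y :: "('v,'e) path \<Rightarrow> 'k::ring"
  shows "left_mult Q r (\<lambda>_. 0) = (\<lambda>_. 0)"
    and "left_mult Q r (\<lambda>z. x z + y z) = (\<lambda>z. left_mult Q r x z + left_mult Q r y z)"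
    and "left_mult Q r (\<lambda>z. x z - y z) = (\<lambda>z. left_mult Q r x z - left_mult Q r y z)"
    and "left_mult Q r (\<lambda>z. c * x z) = (\<lambda>z. c * left_mult Q r x z)"
  by (simp_all add: left_mult_def fun_eq_iff)

lemma right_mult_linear:
  fixes x y :: "('v,'e) path \<Rightarrow> 'k::ring"
  shows "right_mult Q r (\<lambda>_. 0) = (\<lambda>_. 0)"
    and "right_mult Q r (\<lambda>z. x z + y z) = (\<lambda>z. right_mult Q r x z + right_mult Q r y z)"
    and "right_mult Q r (\<lambda>z. x z - y z) = (\<lambda>z. right_mult Q r x z - right_mult Q r y z)"
    and "right_mult Q r (\<lambda>z. c * x z) = (\<lambda>z. c * right_mult Q r x z)"
  by (simp_all add: right_mult_def Let_def fun_eq_iff)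

definition parallel_relations :: "('v,'e) quiver \<Rightarrow> (('v,'e) path \<times> ('v,'e) path) set \<Rightarrow> bool" where
  "parallel_relations Q S \<longleftrightarrow> (\<forall>(p, q) \<in> S. ptail p = ptail q \<and> phead Q p = phead Q q)"

lemma left_mult_hideal:
  assumes "x \<in> hideal Q S" and "valid_path Q r"
  shows "left_mult Q r x \<in> hideal Q S"
  using assms(1)
proof induction
  case (gen p q u w)
  show ?case
  proof (cases "fst u = phead Q r")
    case True
    have "valid_path Q (pconc r u)" and "phead Q (pconc r u) = ptail p"
      using True gen assms(2) by (simp_all add: valid_path_pconc phead_pconc ptail_def)
    from hideal.gen[OF gen(1) this(1) gen(3) this(2) gen(5)] True show ?thesis
      by (simp add: left_mult_linear left_mult_delta pconc_assoc pconc_def)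
  qed (simp add: left_mult_linear left_mult_delta pconc_def hideal.zero)
qed (simp_all add: left_mult_linear hideal.intros)

lemma right_mult_hideal:
  assumes "x \<in> hideal Q S" and "valid_path Q r" and "parallel_relations Q S"
  shows "right_mult Q r x \<in> hideal Q S"
  using assms(1)
proof induction
  case (gen p q u w)
  have "ptail q = ptail p" "phead Q q = phead Q p"
    using assms(3) gen(1) by (auto simp: parallel_relations_def)
  then have heads: "phead Q (pconc (pconc u p) w) = phead Q w" "phead Q (pconc (pconc u q) w) = phead Q w"
    using gen by (simp_all add: phead_pconc)
  show ?case
  proof (cases "phead Q w = fst r")
    case True
    have "valid_path Q (pconc w r)" using True gen assms(2) by (simp add: valid_path_pconc ptail_def)
    moreover have "phead Q p = ptail (pconc w r)" using gen by simp
    ultimately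
    have "(\<lambda>z. delta (pconc (pconc u p) (pconc w r)) z - delta (pconc (pconc u q) (pconc w r)) z)
      \<in> hideal Q S" by (rule hideal.gen[OF gen(1) gen(2) _ gen(4)])
    with True heads show ?thesis
      by (simp add: right_mult_linear right_mult_delta pconc_assoc)
  qed (use heads in \<open>simp add: right_mult_linear right_mult_delta hideal.zero\<close>)
qed (simp_all add: right_mult_linear hideal.intros)

lemma hideal_sum_saturated:
  fixes x :: "('v,'e) path \<Rightarrow> 'k::field"
  assumes "x \<in> hideal Q S"
    and saturated: "\<And>p q u w. (p, q) \<in> S \<Longrightarrow> valid_path Q u \<Longrightarrow> valid_path Q w \<Longrightarrow>
        phead Q u = ptail p \<Longrightarrow> phead Q p = ptail w \<Longrightarrow>
        pconc (pconc u p) w \<in> C \<longleftrightarrow> pconc (pconc u q) w \<in> C"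
  shows "finite {z. x z \<noteq> 0} \<and> sum x (C \<inter> {z. x z \<noteq> 0}) = 0"
  using assms(1)
proof induction
  case (add x y)
  let ?U = "{z. x z \<noteq> 0} \<union> {z. y z \<noteq> 0}"
  have fin: "finite ?U" using add by simp
  have "sum (\<lambda>z. x z + y z) (C \<inter> {z. x z + y z \<noteq> 0}) = sum (\<lambda>z. x z + y z) (C \<inter> ?U)"
    by (rule sum.mono_neutral_left) (use fin in auto)
  also have "\<dots> = sum x (C \<inter> ?U) + sum y (C \<inter> ?U)" by (simp add: sum.distrib)
  also have "sum x (C \<inter> ?U) = sum x (C \<inter> {z. x z \<noteq> 0})"
    by (rule sum.mono_neutral_right) (use fin in auto)
  also have "sum y (C \<inter> ?U) = sum y (C \<inter> {z. y z \<noteq> 0})"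
    by (rule sum.mono_neutral_right) (use fin in auto)
  moreover have "finite {z. x z + y z \<noteq> 0}"
    by (rule finite_subset[OF _ fin]) auto
  ultimately show ?case using add by simp
next
  case (smult x c)
  have "sum (\<lambda>z. c * x z) (C \<inter> {z. c * x z \<noteq> 0}) = sum (\<lambda>z. c * x z) (C \<inter> {z. x z \<noteq> 0})"
    by (rule sum.mono_neutral_left) (use smult in auto)
  also have "\<dots> = c * sum x (C \<inter> {z. x z \<noteq> 0})" by (simp add: sum_distrib_left)
  moreover have "finite {z. c * x z \<noteq> 0}"
    by (rule finite_subset[of _ "{z. x z \<noteq> 0}"]) (use smult in auto)
  ultimately show ?case using smult by simp
next
  case (gen p q u w)
  let ?A = "pconc (pconc u p) w" and ?B = "pconc (pconc u q) w"
  have iff: "?A \<in> C \<longleftrightarrow> ?B \<in> C" using saturated gen by blast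
  show ?case
  proof (cases "?A = ?B")
    case False
    then have "{z. delta ?A z - delta ?B z \<noteq> (0::'k)} = {?A, ?B}" by (auto simp: delta_def)
    with False iff show ?thesis by (cases "?A \<in> C") (auto simp: delta_def)
  qed simp
qed simp

lemma hsim_validD: "hsim K Q S p q \<Longrightarrow> valid_path Q p \<and> valid_path Q q"
  by (simp add: hsim_def)

lemma hsim_refl: "valid_path Q p \<Longrightarrow> hsim K Q S p p"
  by (simp add: hsim_def hideal.zero)

lemma hsim_sym: "hsim K Q S p q \<Longrightarrow> hsim K Q S q p"
  using hideal.smult[where c = "-1"] by (fastforce simp: hsim_def)

lemma hsim_trans: "hsim K Q S p q \<Longrightarrow> hsim K Q S q r \<Longrightarrow> hsim K Q S p r"
  using hideal.add by (fastforce simp: hsim_def)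

text \<open>Summing coefficients over all paths with the endpoints of p separates p from any path
  with other endpoints.\<close>
lemma hsim_ends:
  fixes K :: "'k::field itself" and Q :: "('v,'e) quiver"
  assumes "parallel_relations Q S" and "hsim K Q S p q"
  shows "ptail p = ptail q \<and> phead Q p = phead Q q"
proof (rule ccontr)
  assume ends: "\<not> ?thesis"
  let ?x = "(\<lambda>z. delta p z - delta q z) :: ('v,'e) path \<Rightarrow> 'k"
  let ?C = "{z. ptail z = ptail p \<and> phead Q z = phead Q p}"
  have "?x \<in> hideal Q S" using assms(2) by (simp add: hsim_def)
  then have "sum ?x (?C \<inter> {z. ?x z \<noteq> 0}) = 0"
  proof (rule hideal_sum_saturated[THEN conjunct2])
    fix p' q' u w
    assume "(p', q') \<in> S" "valid_path Q u" "valid_path Q w" "phead Q u = ptail p'" "phead Q p' = ptail w"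
    moreover from \<open>(p', q') \<in> S\<close> have "ptail p' = ptail q' \<and> phead Q p' = phead Q q'"
      using assms(1) by (auto simp: parallel_relations_def)
    ultimately show "pconc (pconc u p') w \<in> ?C \<longleftrightarrow> pconc (pconc u q') w \<in> ?C"
      by (simp add: phead_pconc)
  qed
  moreover have "?C \<inter> {z. ?x z \<noteq> 0} = {p}" using ends by (auto simp: delta_def)
  moreover have "p \<noteq> q" using ends by auto
  ultimately show False by (simp add: delta_def)
qed

lemma hsim_pconc_left:
  fixes K :: "'k::field itself" and Q :: "('v,'e) quiver"
  assumes "parallel_relations Q S" and "hsim K Q S p q" and "valid_path Q r" and "phead Q r = ptail p"
  shows "hsim K Q S (pconc r p) (pconc r q)"
proof -
  have tails: "ptail p = ptail q" using hsim_ends[OF assms(1,2)] by simp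
  have "left_mult Q r ((\<lambda>z. delta p z - delta q z) :: ('v,'e) path \<Rightarrow> 'k) \<in> hideal Q S"
    using assms(2,3) by (simp add: hsim_def left_mult_hideal)
  then show ?thesis
    using assms tails hsim_validD[OF assms(2)]
    by (simp add: hsim_def left_mult_linear left_mult_delta valid_path_pconc ptail_def)
qed

lemma hsim_pconc_right:
  fixes K :: "'k::field itself" and Q :: "('v,'e) quiver"
  assumes "parallel_relations Q S" and "hsim K Q S p q" and "valid_path Q r" and "phead Q p = ptail r"
  shows "hsim K Q S (pconc p r) (pconc q r)"
proof -
  have heads: "phead Q p = phead Q q" using hsim_ends[OF assms(1,2)] by simp
  have "right_mult Q r ((\<lambda>z. delta p z - delta q z) :: ('v,'e) path \<Rightarrow> 'k) \<in> hideal Q S"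
    using assms by (simp add: hsim_def right_mult_hideal)
  then show ?thesis
    using assms heads hsim_validD[OF assms(2)]
    by (simp add: hsim_def right_mult_linear right_mult_delta valid_path_pconc ptail_def)
qed

lemma successively_iff_nth:
  "successively P xs \<longleftrightarrow> (\<forall>i. Suc i < length xs \<longrightarrow> P (xs ! i) (xs ! Suc i))"
  by (induction P xs rule: successively.induct) (auto simp: nth_Cons split: nat.splits)

abbreviation composable_chain :: "('o,'m) cat \<Rightarrow> 'm list \<Rightarrow> bool" where
  "composable_chain C fs \<equiv> successively (\<lambda>f g. cDom C f = cCod C g) fs"

lemma factorization_iff_chain:
  "factorization C g fs \<longleftrightarrow>
     2 \<le> length fs \<and> set fs \<subseteq> cMor C \<and> composable_chain C fs \<and> comp_list C fs = g"
  by (simp add: factorization_def successively_iff_nth)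

definition composition_closed :: "('o,'m) cat \<Rightarrow> bool" where
  "composition_closed C \<longleftrightarrow> (\<forall>f \<in> cMor C. \<forall>g \<in> cMor C. cDom C g = cCod C f \<longrightarrow>
     cComp C g f \<in> cMor C \<and> cDom C (cComp C g f) = cDom C f \<and> cCod C (cComp C g f) = cCod C g)"

lemma comp_list_closed:
  assumes "composition_closed C" and "fs \<noteq> []" and "composable_chain C fs" and "set fs \<subseteq> cMor C"
  shows "comp_list C fs \<in> cMor C \<and> cDom C (comp_list C fs) = cDom C (last fs)
    \<and> cCod C (comp_list C fs) = cCod C (hd fs)"
  using assms
proof (induction C fs rule: comp_list.induct)
  case (2 C f g fs)
  then have "comp_list C (g # fs) \<in> cMor C" and "cDom C f = cCod C (comp_list C (g # fs))"
    and "cDom C (comp_list C (g # fs)) = cDom C (last (f # g # fs))"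
    by auto
  with 2 show ?case by (simp add: composition_closed_def)
qed simp_all

lemma functor_comp_list:
  assumes "is_functor C D FO FM" and "composition_closed C"
    and "fs \<noteq> []" and "composable_chain C fs" and "set fs \<subseteq> cMor C"
  shows "FM (comp_list C fs) = comp_list D (map FM fs)"
  using assms
proof (induction C fs rule: comp_list.induct)
  case (2 C f g fs)
  then have "comp_list C (g # fs) \<in> cMor C" and "cDom C f = cCod C (comp_list C (g # fs))"
    using comp_list_closed[of C "g # fs"] by auto
  with 2 show ?case by (simp add: is_functor_def)
qed simp_all

lemma functor_preserves_iso:
  assumes F: "is_functor C D FO FM" and "cDom C f \<in> cOb C" and "cCod C f \<in> cOb C"
    and "is_iso C f"
  shows "is_iso D (FM f)"
proof -
  from \<open>is_iso C f\<close> obtain g where fg: "f \<in> cMor C" "g \<in> cMor C"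
      "cDom C g = cCod C f" "cCod C g = cDom C f"
      "cComp C g f = cId C (cDom C f)" "cComp C f g = cId C (cCod C f)"
    unfolding is_iso_def by blast
  have "FM g \<in> cMor D \<and> cDom D (FM g) = cCod D (FM f) \<and> cCod D (FM g) = cDom D (FM f)
    \<and> cComp D (FM g) (FM f) = cId D (cDom D (FM f)) \<and> cComp D (FM f) (FM g) = cId D (cCod D (FM f))"
    using F fg assms(2,3) unfolding is_functor_def by metis
  with F fg show ?thesis unfolding is_iso_def is_functor_def by blast
qed

lemma path_poset_simps [simp]:
  "cDom (path_poset K Q S) f = fst f"
  "cCod (path_poset K Q S) f = snd f"
  "cComp (path_poset K Q S) g f = (fst f, snd g)"
  "cId (path_poset K Q S) P = (P, P)"
  by (simp_all add: path_poset_def)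

lemma comp_list_path_poset:
  "fs \<noteq> [] \<Longrightarrow> comp_list (path_poset K Q S) fs = (fst (last fs), snd (hd fs))"
  by (induction "path_poset K Q S" fs rule: comp_list.induct) auto

locale homotopy_path_alg =
  fixes K :: "'k::field itself" and Q :: "('v,'e) quiver"
    and S :: "(('v,'e) path \<times> ('v,'e) path) set"
  assumes homotopy_path_algebra: "homotopy_path_algebra K Q S"
begin

abbreviation homotopic :: "('v,'e) path \<Rightarrow> ('v,'e) path \<Rightarrow> bool" (infix "\<sim>" 50) where
  "p \<sim> q \<equiv> hsim K Q S p q"

abbreviation cls :: "('v,'e) path \<Rightarrow> ('v,'e) path set" where
  "cls \<equiv> hclass K Q S"

abbreviation PathA :: "(('v,'e) path set, ('v,'e) path set \<times> ('v,'e) path set) cat" where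
  "PathA \<equiv> path_poset K Q S"

abbreviation CA :: "('v, ('v,'e) path set) cat" where
  "CA \<equiv> path_category K Q S"

abbreviation \<Phi> :: "('v,'e) path set \<times> ('v,'e) path set \<Rightarrow> ('v,'e) path set" where
  "\<Phi> \<equiv> Phi_mor K Q S"

lemma Q_finite: "finite_quiver Q"
  using homotopy_path_algebra by (simp add: homotopy_path_algebra_def)

lemma S_parallel: "parallel_relations Q S"
  using homotopy_path_algebra by (auto simp: homotopy_path_algebra_def parallel_relations_def)

lemma left_cancel:
  "valid_path Q r \<Longrightarrow> valid_path Q p \<Longrightarrow> valid_path Q q \<Longrightarrow>
    phead Q r = ptail p \<Longrightarrow> phead Q r = ptail q \<Longrightarrow> pconc r p \<sim> pconc r q \<Longrightarrow> p \<sim> q"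
  using homotopy_path_algebra unfolding homotopy_path_algebra_def by blast

lemma hclass_iff: "x \<in> cls p \<longleftrightarrow> x \<sim> p"
  by (simp add: hclass_def)

lemma hclass_eqI: "p \<sim> q \<Longrightarrow> cls p = cls q"
  unfolding hclass_def by (auto intro: hsim_trans hsim_sym)

lemma hclass_eq_iff: "valid_path Q p \<Longrightarrow> cls p = cls q \<longleftrightarrow> p \<sim> q"
  using hclass_eqI hclass_iff hsim_refl by blast

lemma hclass_some_ends:
  assumes "valid_path Q p"
  shows "ptail (SOME x. x \<in> cls p) = ptail p \<and> phead Q (SOME x. x \<in> cls p) = phead Q p"
proof -
  have "(SOME x. x \<in> cls p) \<sim> p"
    using someI[of "\<lambda>x. x \<in> cls p" p] assms by (simp add: hclass_iff hsim_refl)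
  then show ?thesis using hsim_ends[OF S_parallel] by blast
qed

lemma CA_dom [simp]: "valid_path Q p \<Longrightarrow> cDom CA (cls p) = ptail p"
  using hclass_some_ends by (simp add: path_category_def)

lemma CA_cod [simp]: "valid_path Q p \<Longrightarrow> cCod CA (cls p) = phead Q p"
  using hclass_some_ends by (simp add: path_category_def)

lemma CA_mor_iff: "g \<in> cMor CA \<longleftrightarrow> (\<exists>r. valid_path Q r \<and> g = cls r)"
  by (auto simp: path_category_def)

lemma CA_morI: "valid_path Q r \<Longrightarrow> cls r \<in> cMor CA"
  using CA_mor_iff by blast

lemma Phi_ob_hclass [simp]: "valid_path Q p \<Longrightarrow> Phi_ob Q (cls p) = phead Q p"
  using hclass_some_ends by (simp add: Phi_ob_def)

lemma CA_comp:
  assumes "valid_path Q r" and "valid_path Q s" and "phead Q r = ptail s"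
  shows "cComp CA (cls s) (cls r) = cls (pconc r s)"
proof -
  have "x \<sim> pconc r s" if "n \<sim> r" "m \<sim> s" "phead Q n = ptail m" "x \<sim> pconc n m" for x n m
  proof -
    have "pconc n m \<sim> pconc r m"
      using hsim_pconc_right[OF S_parallel \<open>n \<sim> r\<close>] hsim_validD[OF \<open>m \<sim> s\<close>] that(3) by blast
    moreover have "pconc r m \<sim> pconc r s"
      using hsim_pconc_left[OF S_parallel \<open>m \<sim> s\<close> assms(1)] hsim_ends[OF S_parallel] that assms(3)
      by metis
    ultimately show ?thesis using \<open>x \<sim> pconc n m\<close> hsim_trans by blast
  qed
  moreover have "\<exists>n \<in> cls r. \<exists>m \<in> cls s. phead Q n = ptail m \<and> x \<sim> pconc n m"
    if "x \<sim> pconc r s" for x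
    using that assms hsim_refl hclass_iff by blast
  ultimately have "{x. \<exists>n \<in> cls r. \<exists>m \<in> cls s. phead Q n = ptail m \<and> x \<sim> pconc n m} = cls (pconc r s)"
    by (intro set_eqI) (auto simp: hclass_iff)
  then show ?thesis by (simp add: path_category_def)
qed

lemma CA_composition_closed: "composition_closed CA"
  unfolding composition_closed_def
proof (intro ballI impI)
  fix f g assume "f \<in> cMor CA" "g \<in> cMor CA" and dom: "cDom CA g = cCod CA f"
  then obtain r s where rs: "valid_path Q r" "valid_path Q s" "f = cls r" "g = cls s"
    by (auto simp: CA_mor_iff)
  with dom have "phead Q r = ptail s" by simp
  with rs have "cComp CA g f = cls (pconc r s)" and "valid_path Q (pconc r s)"
    by (simp_all add: CA_comp valid_path_pconc)
  with rs \<open>phead Q r = ptail s\<close>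
  show "cComp CA g f \<in> cMor CA \<and> cDom CA (cComp CA g f) = cDom CA f \<and> cCod CA (cComp CA g f) = cCod CA g"
    by (simp add: CA_morI phead_pconc)
qed

lemma PathA_ob_iff: "P \<in> cOb PathA \<longleftrightarrow> (\<exists>p. P = cls p \<and> valid_path Q p)"
  by (simp add: path_poset_def)

lemma PathA_mor_iff:
  "f \<in> cMor PathA \<longleftrightarrow> fst f \<in> cOb PathA \<and> snd f \<in> cOb PathA \<and> path_leq K Q S (fst f) (snd f)"
  by (cases f) (simp add: path_poset_def)

lemma PathA_mor_ob: "f \<in> cMor PathA \<Longrightarrow> fst f \<in> cOb PathA \<and> snd f \<in> cOb PathA"
  by (simp add: PathA_mor_iff)

lemma PathA_morI:
  assumes "valid_path Q p" and "valid_path Q r" and "phead Q p = ptail r"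
  shows "(cls p, cls (pconc p r)) \<in> cMor PathA"
proof -
  have "valid_path Q (pconc p r)" using assms by (rule valid_path_pconc)
  moreover have "path_leq K Q S (cls p) (cls (pconc p r))"
    unfolding path_leq_def using assms calculation by (blast intro: hsim_refl hclass_iff[THEN iffD2])
  ultimately show ?thesis using assms(1) unfolding PathA_mor_iff PathA_ob_iff fst_conv snd_conv by blast
qed

lemma PathA_id_mor:
  assumes "P \<in> cOb PathA"
  shows "(P, P) \<in> cMor PathA"
proof -
  obtain p where "P = cls p" and p: "valid_path Q p" using assms PathA_ob_iff by blast
  moreover have "pconc p (phead Q p, []) = p" by (simp add: pconc_def)
  ultimately show ?thesis
    using PathA_morI[OF p valid_path_trivial_phead[OF Q_finite p]] by (simp add: ptail_def)
qed

lemma PathA_morE_fst: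
  assumes "f \<in> cMor PathA" and "valid_path Q p" and "fst f = cls p"
  obtains r where "valid_path Q r" and "phead Q p = ptail r" and "f = (cls p, cls (pconc p r))"
proof -
  obtain R where f: "f = (cls p, R)" using assms(3) by (cases f) auto
  with assms(1) obtain q0 where R: "R = cls q0" and "path_leq K Q S (cls p) (cls q0)"
    unfolding PathA_mor_iff PathA_ob_iff by auto
  then obtain p' q r where "p' \<sim> p" "q \<sim> q0" "valid_path Q r" "phead Q p' = ptail r"
    "q \<sim> pconc p' r"
    unfolding path_leq_def hclass_def by blast
  moreover from calculation have "pconc p' r \<sim> pconc p r"
    using hsim_pconc_right[OF S_parallel] by blast
  ultimately have "phead Q p = ptail r" and "R = cls (pconc p r)"
    using hsim_ends[OF S_parallel] hclass_eqI R by (metis, metis hsim_sym hsim_trans)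
  with \<open>valid_path Q r\<close> f show thesis using that by blast
qed

lemma Phi_mor_hclass:
  assumes "valid_path Q p" and "valid_path Q r" and "phead Q p = ptail r"
  shows "\<Phi> (cls p, cls (pconc p r)) = cls r"
proof -
  have "x \<sim> r" if "valid_path Q x" "p' \<sim> p" "q' \<sim> pconc p r" "phead Q p' = ptail x"
    "q' \<sim> pconc p' x" for x p' q'
  proof -
    have "pconc p' x \<sim> pconc p x" using hsim_pconc_right[OF S_parallel] that by blast
    then have "pconc p x \<sim> pconc p r" using that by (meson hsim_sym hsim_trans)
    moreover have "phead Q p = ptail x" using hsim_ends[OF S_parallel \<open>p' \<sim> p\<close>] that by simp
    ultimately show ?thesis using left_cancel assms that by blast
  qed
  moreover have "valid_path Q x \<and> (\<exists>p' \<in> cls p. \<exists>q' \<in> cls (pconc p r). phead Q p' = ptail x \<and> q' \<sim> pconc p' x)"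
    if "x \<sim> r" for x
  proof -
    have "ptail x = ptail r" using hsim_ends[OF S_parallel that] by simp
    then have "pconc p r \<sim> pconc p x"
      using hsim_pconc_left[OF S_parallel that assms(1)] assms(3) by (simp add: hsim_sym)
    then show ?thesis
      using that assms \<open>ptail x = ptail r\<close> hsim_validD hsim_refl hclass_iff by metis
  qed
  ultimately show ?thesis
    unfolding Phi_mor_def by (intro set_eqI) (auto simp: hclass_iff hsim_validD)
qed

lemma PathA_morE:
  assumes "f \<in> cMor PathA"
  obtains p r where "valid_path Q p" and "valid_path Q r" and "phead Q p = ptail r"
    and "f = (cls p, cls (pconc p r))"
  using assms PathA_mor_ob[OF assms] PathA_ob_iff PathA_morE_fst by metis

lemma PathA_composable_morE:
  assumes "f \<in> cMor PathA" and "g \<in> cMor PathA" and "fst g = snd f"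
  obtains p r s where "valid_path Q p" and "valid_path Q r" and "valid_path Q s"
    and "phead Q p = ptail r" and "phead Q r = ptail s"
    and "f = (cls p, cls (pconc p r))" and "g = (cls (pconc p r), cls (pconc p (pconc r s)))"
proof -
  obtain p r where p: "valid_path Q p" and r: "valid_path Q r" and pr: "phead Q p = ptail r"
    and f: "f = (cls p, cls (pconc p r))"
    using assms(1) by (rule PathA_morE)
  moreover have "valid_path Q (pconc p r)" using p r pr by (rule valid_path_pconc)
  moreover obtain s where "valid_path Q s" and "phead Q (pconc p r) = ptail s"
    and "g = (cls (pconc p r), cls (pconc (pconc p r) s))"
    using PathA_morE_fst assms(2,3) f calculation by (metis snd_conv)
  ultimately show thesis using that by (simp add: phead_pconc pconc_assoc)
qed

lemma PathA_composition_closed: "composition_closed PathA"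
  unfolding composition_closed_def
proof (intro ballI impI)
  fix f g assume f: "f \<in> cMor PathA" and g: "g \<in> cMor PathA" and "cDom PathA g = cCod PathA f"
  then have "fst g = snd f" by simp
  then obtain p r s where "valid_path Q p" "valid_path Q r" "valid_path Q s"
    "phead Q p = ptail r" "phead Q r = ptail s"
    "f = (cls p, cls (pconc p r))" "g = (cls (pconc p r), cls (pconc p (pconc r s)))"
    by (rule PathA_composable_morE[OF f g])
  then show "cComp PathA g f \<in> cMor PathA \<and> cDom PathA (cComp PathA g f) = cDom PathA f
      \<and> cCod PathA (cComp PathA g f) = cCod PathA g"
    using PathA_morI[of p "pconc r s"] by (simp add: valid_path_pconc)
qed

lemma Phi_functor: "is_functor PathA CA (Phi_ob Q) \<Phi>"
  unfolding is_functor_def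
proof (intro conjI ballI impI)
  fix P assume "P \<in> cOb PathA"
  then obtain p where P: "P = cls p" and p: "valid_path Q p" using PathA_ob_iff by blast
  have triv: "valid_path Q (phead Q p, [])" using valid_path_trivial_phead[OF Q_finite p] .
  then show "Phi_ob Q P \<in> cOb CA" using P p by (simp add: path_category_def valid_path_def)
  have "pconc p (phead Q p, []) = p" by (simp add: pconc_def)
  then show "\<Phi> (cId PathA P) = cId CA (Phi_ob Q P)"
    using Phi_mor_hclass[OF p triv] P p by (simp add: path_category_def ptail_def)
next
  fix f assume "f \<in> cMor PathA"
  then obtain p r where "valid_path Q p" "valid_path Q r" "phead Q p = ptail r"
    and f: "f = (cls p, cls (pconc p r))" by (rule PathA_morE)
  moreover have "valid_path Q (pconc p r)" using calculation by (simp add: valid_path_pconc)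
  ultimately show "\<Phi> f \<in> cMor CA" and "cDom CA (\<Phi> f) = Phi_ob Q (cDom PathA f)"
    and "cCod CA (\<Phi> f) = Phi_ob Q (cCod PathA f)"
    by (simp_all add: Phi_mor_hclass CA_morI phead_pconc)
next
  fix f g assume f: "f \<in> cMor PathA" and g: "g \<in> cMor PathA" and "cDom PathA g = cCod PathA f"
  then have "fst g = snd f" by simp
  then obtain p r s where "valid_path Q p" "valid_path Q r" "valid_path Q s"
    "phead Q p = ptail r" "phead Q r = ptail s"
    "f = (cls p, cls (pconc p r))" "g = (cls (pconc p r), cls (pconc p (pconc r s)))"
    by (rule PathA_composable_morE[OF f g])
  moreover have "\<Phi> (cls p, cls (pconc p (pconc r s))) = cls (pconc r s)"
    using calculation by (intro Phi_mor_hclass) (simp_all add: valid_path_pconc)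
  ultimately show "\<Phi> (cComp PathA g f) = cComp CA (\<Phi> g) (\<Phi> f)"
    by (simp add: Phi_mor_hclass CA_comp valid_path_pconc phead_pconc
        flip: pconc_assoc)
qed

lemma Phi_dom_cod:
  "f \<in> cMor PathA \<Longrightarrow> cDom CA (\<Phi> f) = Phi_ob Q (fst f) \<and> cCod CA (\<Phi> f) = Phi_ob Q (snd f)"
  using Phi_functor unfolding is_functor_def by simp

lemma Phi_inj_on_dom:
  assumes "f \<in> cMor PathA" and "f' \<in> cMor PathA" and "fst f = fst f'" and "\<Phi> f = \<Phi> f'"
  shows "f = f'"
proof -
  obtain p r where p: "valid_path Q p" and "valid_path Q r" "phead Q p = ptail r"
    and f: "f = (cls p, cls (pconc p r))"
    using assms(1) by (rule PathA_morE)
  moreover obtain r' where "valid_path Q r'" "phead Q p = ptail r'" and f': "f' = (cls p, cls (pconc p r'))"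
    using PathA_morE_fst[OF assms(2) p] assms(3) f by auto
  ultimately have "r \<sim> r'" using assms(4) by (simp add: Phi_mor_hclass hclass_eq_iff)
  then have "pconc p r \<sim> pconc p r'" using hsim_pconc_left[OF S_parallel] p \<open>phead Q p = ptail r\<close> by blast
  then show ?thesis using f f' hclass_eqI by simp
qed

lemma lift_morphism:
  assumes "P \<in> cOb PathA" and "g \<in> cMor CA" and "cDom CA g = Phi_ob Q P"
  obtains f where "f \<in> cMor PathA" and "fst f = P" and "\<Phi> f = g"
proof -
  obtain p where P: "P = cls p" and p: "valid_path Q p" using assms(1) PathA_ob_iff by blast
  obtain r where g: "g = cls r" and r: "valid_path Q r" using assms(2) CA_mor_iff by blast
  have "phead Q p = ptail r" using assms(3) P p g r by simp
  with p r have "(cls p, cls (pconc p r)) \<in> cMor PathA" and "\<Phi> (cls p, cls (pconc p r)) = g"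
    by (simp_all add: PathA_morI Phi_mor_hclass g)
  with P show thesis using that by simp
qed

lemma lift_chain:
  assumes "gs \<noteq> []" and "composable_chain CA gs" and "set gs \<subseteq> cMor CA"
    and "P \<in> cOb PathA" and "cDom CA (last gs) = Phi_ob Q P"
  shows "\<exists>fs. composable_chain PathA fs \<and> set fs \<subseteq> cMor PathA \<and> map \<Phi> fs = gs \<and> fst (last fs) = P"
  using assms
proof (induction gs)
  case (Cons g gs)
  show ?case
  proof (cases "gs = []")
    case True
    with Cons.prems obtain f where "f \<in> cMor PathA" "fst f = P" "\<Phi> f = g"
      by (auto elim: lift_morphism)
    with True show ?thesis by (intro exI[of _ "[f]"]) simp
  next
    case False
    with Cons.prems have "composable_chain CA gs" "set gs \<subseteq> cMor CA" "cDom CA (last gs) = Phi_ob Q P"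
      and dom_g: "cDom CA g = cCod CA (hd gs)"
      by (simp_all add: successively_Cons)
    with Cons.IH False Cons.prems(4) obtain fs where fs: "composable_chain PathA fs"
      "set fs \<subseteq> cMor PathA" "map \<Phi> fs = gs" "fst (last fs) = P"
      by blast
    with False obtain f0 fs' where f0: "fs = f0 # fs'" "f0 \<in> cMor PathA" "\<Phi> f0 = hd gs"
      by (cases fs) auto
    with dom_g have "cDom CA g = Phi_ob Q (snd f0)" using Phi_dom_cod[OF f0(2)] by simp
    with PathA_mor_ob[OF f0(2)] Cons.prems(3) obtain f where "f \<in> cMor PathA" "fst f = snd f0" "\<Phi> f = g"
      by (auto elim: lift_morphism)
    with fs f0 show ?thesis
      by (intro exI[of _ "f # fs"]) simp
  qed
qed simp

lemma lift_chain_unique: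
  assumes "composable_chain PathA fs" and "composable_chain PathA fs'"
    and "set fs \<subseteq> cMor PathA" and "set fs' \<subseteq> cMor PathA"
    and "map \<Phi> fs = map \<Phi> fs'" and "fst (last fs) = fst (last fs')"
  shows "fs = fs'"
  using assms
proof (induction fs arbitrary: fs')
  case (Cons f fs)
  then obtain f' fs'' where fs': "fs' = f' # fs''" by (cases fs') auto
  show ?case
  proof (cases "fs = []")
    case True
    with Cons.prems fs' show ?thesis by (auto intro: Phi_inj_on_dom)
  next
    case False
    with Cons.prems fs' have "fs'' \<noteq> []" by auto
    with Cons.IH[of fs''] Cons.prems fs' False have "fs = fs''"
      by (simp add: successively_Cons)
    moreover from this Cons.prems fs' False \<open>fs'' \<noteq> []\<close> have "fst f = fst f'"
      by (simp add: successively_Cons)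
    ultimately show ?thesis using Cons.prems fs' Phi_inj_on_dom by simp
  qed
qed simp

lemma factorization_equiv_refl:
  assumes "2 \<le> length fs" and "set fs \<subseteq> cMor PathA" and "composable_chain PathA fs"
  shows "factorization_equiv PathA fs fs"
proof -
  let ?n = "length fs - 1"
  let ?hs = "map (\<lambda>i. (fst (fs ! i), fst (fs ! i))) [0..<?n]"
  have hs: "?hs ! i = (fst (fs ! i), fst (fs ! i))" if "i < ?n" for i
    using that by simp
  have ids: "(fst (fs ! i), fst (fs ! i)) \<in> cMor PathA" if "i < length fs" for i
    using that assms(2) PathA_mor_ob PathA_id_mor by (meson nth_mem subsetD)
  have chain: "fst (fs ! (i - 1)) = snd (fs ! i)" if "0 < i" "i < length fs" for i
    using assms(3) that by (auto simp: successively_iff_nth)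
  show ?thesis
    unfolding factorization_equiv_def
  proof (intro conjI exI[of _ ?hs] allI impI)
    show "fs ! 0 = cComp PathA (fs ! 0) (?hs ! 0)" using assms(1) hs[of 0] by simp
  next
    fix i assume "0 < i \<and> i < length fs - 1"
    then have "0 < i" "i - 1 < ?n" "i < ?n" "i < length fs" by auto
    then show "fs ! i = cComp PathA (?hs ! (i - 1)) (cComp PathA (fs ! i) (?hs ! i))"
      using hs chain by (simp add: prod_eq_iff)
  next
    have "length fs - 2 = ?n - 1" by simp
    then show "fs ! ?n = cComp PathA (?hs ! (length fs - 2)) (fs ! ?n)"
      using assms(1) hs[of "?n - 1"] chain[of ?n] by (simp add: prod_eq_iff)
  qed (use ids in simp_all)
qed

lemma nontrivial_factorization_lift:
  assumes "p \<in> cMor PathA" and "nontrivial_factorization CA (\<Phi> p) gs"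
  obtains fs where "nontrivial_factorization PathA p fs" and "map \<Phi> fs = gs"
proof -
  from assms(2) have gs: "2 \<le> length gs" "set gs \<subseteq> cMor CA" "composable_chain CA gs"
    "comp_list CA gs = \<Phi> p" and gs_non_iso: "\<forall>g \<in> set gs. \<not> is_iso CA g"
    by (simp_all add: nontrivial_factorization_def factorization_iff_chain)
  then have "gs \<noteq> []" by auto
  have "cDom CA (last gs) = cDom CA (\<Phi> p)"
    using comp_list_closed[OF CA_composition_closed \<open>gs \<noteq> []\<close> gs(3,2)] gs(4) by simp
  also have "\<dots> = Phi_ob Q (fst p)"
    using Phi_dom_cod[OF assms(1)] by simp
  finally obtain fs where fs: "composable_chain PathA fs" "set fs \<subseteq> cMor PathA" "map \<Phi> fs = gs"
    "fst (last fs) = fst p"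
    using lift_chain[OF \<open>gs \<noteq> []\<close> gs(3,2)] PathA_mor_ob[OF assms(1)] by blast
  then have "length fs = length gs" and "fs \<noteq> []" using gs(1) by auto
  have "comp_list PathA fs = p"
  proof (rule Phi_inj_on_dom)
    show "comp_list PathA fs \<in> cMor PathA" and "fst (comp_list PathA fs) = fst p"
      using comp_list_closed[OF PathA_composition_closed \<open>fs \<noteq> []\<close> fs(1,2)] fs(4) by simp_all
    show "\<Phi> (comp_list PathA fs) = \<Phi> p"
      using functor_comp_list[OF Phi_functor PathA_composition_closed \<open>fs \<noteq> []\<close> fs(1,2)] fs(3) gs(4)
      by simp
  qed (rule assms(1))
  moreover have "\<not> is_iso PathA f" if "f \<in> set fs" for f
  proof
    assume "is_iso PathA f"
    moreover have "f \<in> cMor PathA" using that fs(2) by blast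
    ultimately have "is_iso CA (\<Phi> f)"
      using functor_preserves_iso[OF Phi_functor] PathA_mor_ob by simp
    moreover have "\<Phi> f \<in> set gs" using that fs(3) by auto
    ultimately show False using gs_non_iso by blast
  qed
  ultimately have "nontrivial_factorization PathA p fs"
    using fs gs(1) \<open>length fs = length gs\<close>
    by (simp add: nontrivial_factorization_def factorization_iff_chain)
  then show thesis using fs(3) that by blast
qed

lemma nontrivial_factorization_lift_unique:
  assumes "nontrivial_factorization PathA p fs" and "nontrivial_factorization PathA p fs'"
    and "map \<Phi> fs = map \<Phi> fs'"
  shows "fs = fs'"
proof -
  have "fst (last xs) = fst p" if "nontrivial_factorization PathA p xs" for xs
  proof -
    have "xs \<noteq> []" and "comp_list PathA xs = p"
      using that by (auto simp: nontrivial_factorization_def factorization_iff_chain)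
    then show ?thesis by (auto simp: comp_list_path_poset)
  qed
  with assms show ?thesis
    by (intro lift_chain_unique) (simp_all add: nontrivial_factorization_def factorization_iff_chain)
qed

theorem Phi_almost_discrete_fibration: "almost_discrete_fibration PathA CA (Phi_ob Q) \<Phi>"
  unfolding almost_discrete_fibration_def
proof (intro conjI Phi_functor ballI allI impI)
  fix q p gs
  assume "p \<in> cMor PathA" "\<Phi> p = q" "nontrivial_factorization CA q gs"
  then show "\<exists>fs. nontrivial_factorization PathA p fs \<and> map \<Phi> fs = gs"
    by (blast elim: nontrivial_factorization_lift)
next
  fix q p gs fs fs'
  assume lifts: "nontrivial_factorization PathA p fs \<and> map \<Phi> fs = gs
    \<and> nontrivial_factorization PathA p fs' \<and> map \<Phi> fs' = gs"
  then have "fs' = fs" using nontrivial_factorization_lift_unique by metis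
  moreover have "2 \<le> length fs" "set fs \<subseteq> cMor PathA" "composable_chain PathA fs"
    using lifts by (simp_all add: nontrivial_factorization_def factorization_iff_chain)
  ultimately show "factorization_equiv PathA fs fs'" by (simp add: factorization_equiv_refl)
qed

end

theorem proposition4p1:
  fixes K :: "'k::field itself"
    and Q :: "('v,'e) quiver"
    and S :: "(('v,'e) path \<times> ('v,'e) path) set"
  assumes "homotopy_path_algebra K Q S"
  shows "almost_discrete_fibration (path_poset K Q S) (path_category K Q S)
           (Phi_ob Q) (Phi_mor K Q S)"
proof -
  interpret homotopy_path_alg K Q S by (rule homotopy_path_alg.intro) (fact assms)
  show ?thesis by (rule Phi_almost_discrete_fibration)
qed

end
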